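(* Let $q=4$. Let $\mathcal N_1,\dots,\mathcal N_5$ be the sets of $\Gamma$-planes, $2_{\mathscr C}$-planes, $3_{\mathscr C}$-planes, $\overline{1_{\mathscr C}}$-planes and $0_{\mathscr C}$-planes, and $\mathcal M_1,\dots,\mathcal M_5$ the sets of $\mathscr C$-points, T-points, $3_\Gamma$-points, $1_\Gamma$-points and $0_\Gamma$-points (these are the $G_4$-orbits). For each pair $(i,j)$ every plane of $\mathcal N_i$ contains exactly $t_{ij}$ points of $\mathcal M_j$ and every point of $\mathcal M_j$ lies on exactly $b_{ij}$ planes of $\mathcal N_i$, where, listing $(t_{ij},b_{ij})$ for $j=1,\dots,5$: $\mathcal N_1$: $(1,1),(8,2),(6,3),(6,1),(0,0)$; $\mathcal N_2$: $(2,8),(7,7),(1,2),(6,4),(5,5)$; $\mathcal N_3$: $(3,6),(2,1),(4,4),(6,2),(6,3)$; $\mathcal N_4$: $(1,6),(4,6),(2,6),(10,10),(4,6)$; $\mathcal N_5$: $(0,0),(5,5),(3,6),(6,4),(7,7)$.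
   Context: Notation. $\mathbb F_q$ is the field with $q$ elements, $\mathbb F_q^+=\mathbb F_q\cup\{\infty\}$. Points of $\mathrm{PG}(3,q)$ are written $\mathbf P(x_0,x_1,x_2,x_3)$ with $x$ a nonzero row vector up to scalars; $\boldsymbol\pi(c_0,c_1,c_2,c_3)$ is the plane $c_0x_0+c_1x_1+c_2x_2+c_3x_3=0$. Put $P(t)=\mathbf P(t^3,t^2,t,1)$ for $t\in\mathbb F_q$, $P(\infty)=\mathbf P(1,0,0,0)$, and $\mathscr C=\{P(t):t\in\mathbb F_q^+\}$ (the twisted cubic). The osculating planes are $\pi_{\rm osc}(t)=\boldsymbol\pi(1,-3t,3t^2,-t^3)$ ($t\in\mathbb F_q$) and $\pi_{\rm osc}(\infty)=\boldsymbol\pi(0,0,0,1)$; these $q+1$ planes are called $\Gamma$-planes. The tangent at $P(t)$, $t\in\mathbb F_q$, is the line through $P(t)$ and $\mathbf P(3t^2,2t,1,0)$; the tangent at $P(\infty)$ is the line through $\mathbf P(1,0,0,0)$ and $\mathbf P(0,1,0,0)$. $G_q$ is the group of all projectivities of $\mathrm{PG}(3,q)$ mapping $\mathscr C$ onto itself. Plane types: $\Gamma$-plane = osculating plane; $\overline{1_{\mathscr C}}$-plane = non-osculating plane meeting $\mathscr C$ in exactly one point; $d_{\mathscr C}$-plane ($d\in\{0,2,3\}$) = plane meeting $\mathscr C$ in exactly $d$ points. Point types (for $q\not\equiv0\pmod 3$): $\mathscr C$-point = point of $\mathscr C$; T-point = point off $\mathscr C$ on some tangent; for $\mu\in\{0,1,3\}$,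 $\mu_\Gamma$-point = point off $\mathscr C$, on no tangent, lying on exactly $\mu$ $\Gamma$-planes. *)

theory Defs
  imports "HOL-Analysis.Finite_Cartesian_Product"
begin

definition vec4 :: "'a \<Rightarrow> 'a \<Rightarrow> 'a \<Rightarrow> 'a \<Rightarrow> 'a^4" where
  "vec4 a b c d = (\<chi> i. if i = 0 then a else if i = 1 then b else if i = 2 then c else d)"

definition smul4 :: "'a::field \<Rightarrow> 'a^4 \<Rightarrow> 'a^4" where
  "smul4 c x = (\<chi> i. c * x $ i)"

definition dot4 :: "'a::field^4 \<Rightarrow> 'a^4 \<Rightarrow> 'a" where
  "dot4 c x = (\<Sum>i\<in>UNIV. c $ i * x $ i)"

definition pt :: "'a::field^4 \<Rightarrow> ('a^4) set" where
  "pt x = {smul4 c x | c. c \<noteq> 0}"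

definition PG_points :: "('a::field^4) set set" where
  "PG_points = {pt x | x. x \<noteq> 0}"

definition plane :: "'a::field^4 \<Rightarrow> ('a^4) set set" where
  "plane c = {P \<in> PG_points. \<forall>x\<in>P. dot4 c x = 0}"

definition PG_planes :: "('a::field^4) set set set" where
  "PG_planes = {plane c | c. c \<noteq> 0}"

definition line_through :: "'a::field^4 \<Rightarrow> 'a^4 \<Rightarrow> ('a^4) set set" where
  "line_through x y = {pt (smul4 a x + smul4 b y) | a b. a \<noteq> 0 \<or> b \<noteq> 0}"

text \<open>Twisted cubic; None stands for the parameter infinity.\<close>
definition cubic_pt :: "'a::field option \<Rightarrow> ('a^4) set" where
  "cubic_pt t = (case t of None \<Rightarrow> pt (vec4 1 0 0 0)
                 | Some s \<Rightarrow> pt (vec4 (s^3) (s^2) s 1))"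

definition twisted_cubic :: "('a::field^4) set set" where
  "twisted_cubic = range cubic_pt"

definition osc_plane :: "'a::field option \<Rightarrow> ('a^4) set set" where
  "osc_plane t = (case t of None \<Rightarrow> plane (vec4 0 0 0 1)
                  | Some s \<Rightarrow> plane (vec4 1 (-3 * s) (3 * s^2) (-(s^3))))"

definition Gamma_planes :: "('a::field^4) set set set" where
  "Gamma_planes = range osc_plane"

definition tangent :: "'a::field option \<Rightarrow> ('a^4) set set" where
  "tangent t = (case t of None \<Rightarrow> line_through (vec4 1 0 0 0) (vec4 0 1 0 0)
                | Some s \<Rightarrow> line_through (vec4 (s^3) (s^2) s 1) (vec4 (3 * s^2) (2 * s) 1 0))"

definition onebar_planes :: "('a::field^4) set set set" where
  "onebar_planes = {\<pi> \<in> PG_planes. \<pi> \<notin> Gamma_planes \<and> card (\<pi> \<inter> twisted_cubic) = 1}"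

definition dC_planes :: "nat \<Rightarrow> ('a::field^4) set set set" where
  "dC_planes d = {\<pi> \<in> PG_planes. card (\<pi> \<inter> twisted_cubic) = d}"

definition T_points :: "('a::field^4) set set" where
  "T_points = {P \<in> PG_points. P \<notin> twisted_cubic \<and> (\<exists>t. P \<in> tangent t)}"

definition muGamma_points :: "nat \<Rightarrow> ('a::field^4) set set" where
  "muGamma_points \<mu> = {P \<in> PG_points. P \<notin> twisted_cubic \<and> (\<forall>t. P \<notin> tangent t)
                          \<and> card {\<pi> \<in> Gamma_planes. P \<in> \<pi>} = \<mu>}"

text \<open>The orbit lists N_1..N_5 and M_1..M_5 (0-indexed).\<close>
definition plane_classes :: "('a::field^4) set set set list" where
  "plane_classes = [Gamma_planes, dC_planes 2, dC_planes 3, onebar_planes, dC_planes 0]"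

definition point_classes :: "('a::field^4) set set list" where
  "point_classes = [twisted_cubic, T_points, muGamma_points 3, muGamma_points 1, muGamma_points 0]"

end

theory Submission
  imports Defs "HOL-Analysis.Cartesian_Space" "HOL-Number_Theory.Residues"
begin

text \<open>The theorem is a finite computation in \<open>PG(3, 4)\<close>. A field with four elements has
  characteristic 2 and consists of \<open>0, 1, w, w + 1\<close> with \<open>w\<^sup>2 = w + 1\<close>, so it is isomorphic to
  an explicit model of \<open>GF(4)\<close>. Points and planes of \<open>PG(3, 4)\<close> correspond bijectively to the 85
  coordinate vectors over the model whose first nonzero entry is 1 (for planes because a plane
  determines its equation up to a scalar), and incidence becomes the vanishing of a dot product.
  The curve, its tangents and osculating planes, and hence all ten orbits, become explicit lists
  of such vectors, and the incidence numbers are evaluated by rewriting.\<close>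

section \<open>Points and planes over an arbitrary field\<close>

lemma numeral_4_eq_0 [simp]: "(4 :: 4) = 0"
  by simp

lemma vec4_nth [simp]:
  "vec4 a b c d $ 0 = a" "vec4 a b c d $ 1 = b" "vec4 a b c d $ 2 = c" "vec4 a b c d $ 3 = d"
  by (simp_all add: vec4_def)

lemma vec4_eq_iff: "vec4 a b c d = vec4 a' b' c' d' \<longleftrightarrow> a = a' \<and> b = b' \<and> c = c' \<and> d = d'"
  by (auto simp: vec_eq_iff forall_4 vec4_def)

lemma zero_eq_vec4: "0 = vec4 0 0 0 0"
  by (simp add: vec_eq_iff vec4_def)

lemma vec4_eta: "x = vec4 (x $ 0) (x $ 1) (x $ 2) (x $ 3)"
  by (simp add: vec_eq_iff forall_4 vec4_def)

lemma vec4_add [simp]: "vec4 a b c d + vec4 a' b' c' d' = vec4 (a + a') (b + b') (c + c') (d + d')"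
  by (simp add: vec_eq_iff vec4_def)

lemma smul4_vec4 [simp]: "smul4 k (vec4 a b c d) = vec4 (k * a) (k * b) (k * c) (k * d)"
  by (simp add: vec_eq_iff vec4_def smul4_def)

lemma dot4_vec4 [simp]: "dot4 (vec4 a b c d) (vec4 x y z t) = a * x + b * y + c * z + d * t"
  by (simp add: dot4_def sum_4 add.assoc)

lemma smul4_smul4: "smul4 a (smul4 b x) = smul4 (a * b) x"
  by (simp add: vec_eq_iff smul4_def mult.assoc)

lemma smul4_one [simp]: "smul4 1 x = x"
  by (simp add: vec_eq_iff smul4_def)

lemma dot4_smul4_left: "dot4 (smul4 k c) x = k * dot4 c x"
  by (simp add: dot4_def smul4_def sum_distrib_left mult.assoc)

lemma dot4_smul4_right: "dot4 c (smul4 k x) = k * dot4 c x"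
  by (simp add: dot4_def smul4_def sum_distrib_left algebra_simps)

lemma pt_smul4: "k \<noteq> 0 \<Longrightarrow> pt (smul4 k x) = pt x"
  unfolding pt_def
  by (force simp: smul4_smul4 intro: exI[where x = "_ / k"])

lemma self_in_pt: "x \<in> pt x"
  unfolding pt_def by (auto intro: exI[where x = 1])

lemma pt_eq_imp_smul4: "pt x = pt y \<Longrightarrow> \<exists>k. k \<noteq> 0 \<and> y = smul4 k x"
  using self_in_pt[of y] by (auto simp: pt_def)

lemma pt_in_plane_iff:
  assumes "x \<noteq> 0"
  shows "pt x \<in> plane c \<longleftrightarrow> dot4 c x = 0"
proof -
  have "(\<forall>y\<in>pt x. dot4 c y = 0) \<longleftrightarrow> dot4 c x = 0"
    using self_in_pt[of x] by (auto simp: pt_def dot4_smul4_right)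
  moreover have "pt x \<in> PG_points"
    using assms by (auto simp: PG_points_def)
  ultimately show ?thesis
    by (simp add: plane_def)
qed

lemma plane_smul4: "k \<noteq> 0 \<Longrightarrow> plane (smul4 k c) = plane c"
  by (simp add: plane_def dot4_smul4_left)

lemma plane_subset_imp_smul4:
  assumes "c \<noteq> 0" and "plane c \<subseteq> plane d"
  shows "\<exists>k. d = smul4 k c"
proof -
  have on_d: "dot4 d x = 0" if "dot4 c x = 0" for x
  proof (cases "x = 0")
    case True
    then show ?thesis by (simp add: dot4_def)
  next
    case False
    then show ?thesis using assms(2) that pt_in_plane_iff by blast
  qed
  obtain i where ci: "c $ i \<noteq> 0" using assms(1) by (auto simp: vec_eq_iff)
  have "d $ j = d $ i / c $ i * c $ j" for j
  proof (cases "j = i")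
    case True
    then show ?thesis using ci by simp
  next
    case False
    define x where "x = (\<chi> l. (if l = i then c $ j else 0) + (if l = j then - c $ i else 0))"
    have dot_x: "dot4 y x = y $ i * c $ j - y $ j * c $ i" for y
    proof -
      have "dot4 y x = (\<Sum>l\<in>UNIV. if l = i then y $ l * c $ j else 0)
          + (\<Sum>l\<in>UNIV. if l = j then y $ l * - c $ i else 0)"
        unfolding dot4_def x_def sum.distrib[symmetric] by (rule sum.cong) auto
      then show ?thesis by simp
    qed
    have "dot4 d x = 0" by (rule on_d) (simp add: dot_x mult.commute)
    then show ?thesis using ci by (simp add: dot_x field_simps)
  qed
  then have "d = smul4 (d $ i / c $ i) c"
    unfolding vec_eq_iff smul4_def vec_lambda_beta by blast
  then show ?thesis ..
qed

section \<open>A model of \<open>GF(4)\<close> and coordinates over it\<close>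

datatype gf4 = G0 | G1 | GW | GW2

fun gf4_add :: "gf4 \<Rightarrow> gf4 \<Rightarrow> gf4" (infixl "\<boxplus>" 65) where
  "G0 \<boxplus> y = y"
| "x \<boxplus> G0 = x"
| "G1 \<boxplus> G1 = G0" | "G1 \<boxplus> GW = GW2" | "G1 \<boxplus> GW2 = GW"
| "GW \<boxplus> G1 = GW2" | "GW \<boxplus> GW = G0" | "GW \<boxplus> GW2 = G1"
| "GW2 \<boxplus> G1 = GW" | "GW2 \<boxplus> GW = G1" | "GW2 \<boxplus> GW2 = G0"

fun gf4_mul :: "gf4 \<Rightarrow> gf4 \<Rightarrow> gf4" (infixl "\<boxtimes>" 70) where
  "G0 \<boxtimes> y = G0"
| "x \<boxtimes> G0 = G0"
| "G1 \<boxtimes> y = y"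
| "x \<boxtimes> G1 = x"
| "GW \<boxtimes> GW = GW2" | "GW \<boxtimes> GW2 = G1" | "GW2 \<boxtimes> GW = G1" | "GW2 \<boxtimes> GW2 = GW"

fun gf4_inv :: "gf4 \<Rightarrow> gf4" where
  "gf4_inv G0 = G0" | "gf4_inv G1 = G1" | "gf4_inv GW = GW2" | "gf4_inv GW2 = GW"

definition gf4_elems :: "gf4 list" where
  "gf4_elems = [G0, G1, GW, GW2]"

lemma set_gf4_elems: "set gf4_elems = UNIV"
  using gf4.exhaust by (auto simp: gf4_elems_def)

lemma gf4_mul_eq_G0_iff [simp]: "a \<boxtimes> b = G0 \<longleftrightarrow> a = G0 \<or> b = G0"
  by (cases a; cases b) simp_all

lemma gf4_mul_G1_left [simp]: "G1 \<boxtimes> a = a"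
  by (cases a) simp_all

lemma gf4_mul_G1_right [simp]: "a \<boxtimes> G1 = a"
  by (cases a) simp_all

lemma gf4_inv_eq_G0_iff [simp]: "gf4_inv a = G0 \<longleftrightarrow> a = G0"
  by (cases a) simp_all

lemma gf4_inv_mul: "a \<noteq> G0 \<Longrightarrow> gf4_inv a \<boxtimes> a = G1"
  by (cases a) simp_all

type_synonym coords = "gf4 \<times> gf4 \<times> gf4 \<times> gf4"

fun dot_coords :: "coords \<Rightarrow> coords \<Rightarrow> gf4" where
  "dot_coords (a, b, c, d) (x, y, z, t) = a \<boxtimes> x \<boxplus> b \<boxtimes> y \<boxplus> c \<boxtimes> z \<boxplus> d \<boxtimes> t"

fun scale_coords :: "gf4 \<Rightarrow> coords \<Rightarrow> coords" where
  "scale_coords k (a, b, c, d) = (k \<boxtimes> a, k \<boxtimes> b, k \<boxtimes> c, k \<boxtimes> d)"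

fun add_coords :: "coords \<Rightarrow> coords \<Rightarrow> coords" where
  "add_coords (a, b, c, d) (x, y, z, t) = (a \<boxplus> x, b \<boxplus> y, c \<boxplus> z, d \<boxplus> t)"

fun lead_coord :: "coords \<Rightarrow> gf4" where
  "lead_coord (a, b, c, d) =
     (if a \<noteq> G0 then a else if b \<noteq> G0 then b else if c \<noteq> G0 then c else d)"

definition normalize :: "coords \<Rightarrow> coords" where
  "normalize c = scale_coords (gf4_inv (lead_coord c)) c"

definition normalized_coords :: "coords list" where
  "normalized_coords = filter (\<lambda>c. lead_coord c = G1)
     (List.product gf4_elems (List.product gf4_elems (List.product gf4_elems gf4_elems)))"

lemma set_normalized_coords: "set normalized_coords = {c. lead_coord c = G1}"
  by (simp add: normalized_coords_def set_gf4_elems)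

lemma distinct_normalized_coords: "distinct normalized_coords"
  by (simp add: normalized_coords_def gf4_elems_def)

lemma scale_coords_G1 [simp]: "scale_coords G1 c = c"
  by (cases c) simp

lemma lead_coord_eq_G0_iff: "lead_coord c = G0 \<longleftrightarrow> c = (G0, G0, G0, G0)"
  by (cases c) simp

lemma lead_coord_scale_coords: "k \<noteq> G0 \<Longrightarrow> lead_coord (scale_coords k c) = k \<boxtimes> lead_coord c"
  by (cases c) simp

lemma normalize_normalized:
  "c \<noteq> (G0, G0, G0, G0) \<Longrightarrow> normalize c \<in> set normalized_coords"
  using lead_coord_eq_G0_iff[of c]
  by (simp add: set_normalized_coords normalize_def lead_coord_scale_coords gf4_inv_mul)

lemma normalized_coords_nonzero: "c \<in> set normalized_coords \<Longrightarrow> c \<noteq> (G0, G0, G0, G0)"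
  by (auto simp: set_normalized_coords)

lemma normalized_scale_coords_eq:
  assumes "a \<in> set normalized_coords" and "scale_coords k a \<in> set normalized_coords"
  shows "scale_coords k a = a"
proof (cases "k = G0")
  case True
  then show ?thesis
    using assms(2) by (cases a) (simp add: set_normalized_coords)
next
  case False
  then show ?thesis
    using assms by (simp add: set_normalized_coords lead_coord_scale_coords)
qed

section \<open>The twisted cubic and the orbits in coordinates\<close>

definition line_coords :: "coords \<Rightarrow> coords \<Rightarrow> coords list" where
  "line_coords p r = [normalize (add_coords (scale_coords a p) (scale_coords b r)).
     a \<leftarrow> gf4_elems, b \<leftarrow> gf4_elems, (a, b) \<noteq> (G0, G0)]"

lemma set_line_coords:
  "set (line_coords p r) =
     {normalize (add_coords (scale_coords a p) (scale_coords b r)) | a b. (a, b) \<noteq> (G0, G0)}"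
  by (auto simp: line_coords_def set_gf4_elems)

text \<open>In characteristic 2 the osculating plane \<open>\<pi>(1, -3t, 3t^2, -t^3)\<close> becomes
  \<open>\<pi>(1, t, t^2, t^3)\<close> and the tangent direction \<open>(3t^2, 2t, 1, 0)\<close> becomes \<open>(t^2, 0, 1, 0)\<close>.\<close>

definition cubic_coords :: "gf4 \<Rightarrow> coords" where
  "cubic_coords g = (g \<boxtimes> g \<boxtimes> g, g \<boxtimes> g, g, G1)"

definition osc_coords :: "gf4 \<Rightarrow> coords" where
  "osc_coords g = (G1, g, g \<boxtimes> g, g \<boxtimes> g \<boxtimes> g)"

definition tangent_dir :: "gf4 \<Rightarrow> coords" where
  "tangent_dir g = (g \<boxtimes> g, G0, G1, G0)"

definition cubic_list :: "coords list" where
  "cubic_list = (G1, G0, G0, G0) # map cubic_coords gf4_elems"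

definition osc_list :: "coords list" where
  "osc_list = (G0, G0, G0, G1) # map osc_coords gf4_elems"

definition tangent_list :: "coords list" where
  "tangent_list = line_coords (G1, G0, G0, G0) (G0, G1, G0, G0)
     @ concat (map (\<lambda>g. line_coords (cubic_coords g) (tangent_dir g)) gf4_elems)"

lemma cubic_list_normalized: "set cubic_list \<subseteq> set normalized_coords"
  by (simp add: cubic_list_def cubic_coords_def gf4_elems_def set_normalized_coords)

lemma distinct_cubic_list: "distinct cubic_list"
  by (simp add: cubic_list_def cubic_coords_def gf4_elems_def)

lemma osc_list_normalized: "set osc_list \<subseteq> set normalized_coords"
  by (simp add: osc_list_def osc_coords_def gf4_elems_def set_normalized_coords)

lemma distinct_osc_list: "distinct osc_list"
  by (simp add: osc_list_def osc_coords_def gf4_elems_def)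

lemma tangent_list_normalized: "set tangent_list \<subseteq> set normalized_coords"
  by (simp add: tangent_list_def line_coords_def normalize_def cubic_coords_def tangent_dir_def
      gf4_elems_def set_normalized_coords)

definition points_on :: "coords \<Rightarrow> coords list \<Rightarrow> nat" where
  "points_on c xs = length (filter (\<lambda>x. dot_coords c x = G0) xs)"

definition planes_through :: "coords \<Rightarrow> coords list \<Rightarrow> nat" where
  "planes_through x cs = length (filter (\<lambda>c. dot_coords c x = G0) cs)"

definition point_class_coords :: "coords list list" where
  "point_class_coords = map (\<lambda>Q. filter Q normalized_coords)
     [\<lambda>x. x \<in> set cubic_list,
      \<lambda>x. x \<notin> set cubic_list \<and> x \<in> set tangent_list,
      \<lambda>x. x \<notin> set cubic_list \<and> x \<notin> set tangent_list \<and> planes_through x osc_list = 3,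
      \<lambda>x. x \<notin> set cubic_list \<and> x \<notin> set tangent_list \<and> planes_through x osc_list = 1,
      \<lambda>x. x \<notin> set cubic_list \<and> x \<notin> set tangent_list \<and> planes_through x osc_list = 0]"

definition plane_class_coords :: "coords list list" where
  "plane_class_coords = map (\<lambda>Q. filter Q normalized_coords)
     [\<lambda>c. c \<in> set osc_list,
      \<lambda>c. points_on c cubic_list = 2,
      \<lambda>c. points_on c cubic_list = 3,
      \<lambda>c. c \<notin> set osc_list \<and> points_on c cubic_list = 1,
      \<lambda>c. points_on c cubic_list = 0]"

definition points_on_plane_table :: "nat list list" where
  "points_on_plane_table = [[1,8,6,6,0],[2,7,1,6,5],[3,2,4,6,6],[1,4,2,10,4],[0,5,3,6,7]]"

definition planes_through_point_table :: "nat list list" where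
  "planes_through_point_table = [[1,2,3,1,0],[8,7,2,4,5],[6,1,4,2,3],[6,6,6,10,6],[0,5,6,4,7]]"

lemma incidence_counts:
  "map (\<lambda>N. map (\<lambda>M. ((\<lambda>c. points_on c M) ` set N, (\<lambda>x. planes_through x N) ` set M))
       point_class_coords) plane_class_coords
   = map (\<lambda>i. map (\<lambda>j. ({points_on_plane_table ! i ! j}, {planes_through_point_table ! i ! j}))
       [0..<5]) [0..<5]"
  by code_simp

lemma length_point_class_coords [simp]: "length point_class_coords = 5"
  by (simp add: point_class_coords_def)

lemma length_plane_class_coords [simp]: "length plane_class_coords = 5"
  by (simp add: plane_class_coords_def)

lemma incidence_counts_nth:
  assumes "i < 5" and "j < 5"
  shows "(\<lambda>c. points_on c (point_class_coords ! j)) ` set (plane_class_coords ! i)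
           = {points_on_plane_table ! i ! j}"
    and "(\<lambda>x. planes_through x (plane_class_coords ! i)) ` set (point_class_coords ! j)
           = {planes_through_point_table ! i ! j}"
  using arg_cong[OF incidence_counts, of "\<lambda>T. T ! i ! j"] assms by simp_all

lemma point_class_coords_normalized:
  "M \<in> set point_class_coords \<Longrightarrow> set M \<subseteq> set normalized_coords \<and> distinct M"
  by (auto simp: point_class_coords_def distinct_normalized_coords)

lemma plane_class_coords_normalized:
  "N \<in> set plane_class_coords \<Longrightarrow> set N \<subseteq> set normalized_coords \<and> distinct N"
  by (auto simp: plane_class_coords_def distinct_normalized_coords)

section \<open>Transfer to an arbitrary field with four elements\<close>

locale field4 =
  fixes w :: "'a::{field,finite}"
  assumes card_4: "CARD('a) = 4"
    and w_notin: "w \<notin> {0, 1}"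
begin

lemma one_add_one_eq_0 [simp]: "1 + 1 = (0::'a)"
proof -
  have "prime CHAR('a)"
    by (rule prime_CHAR_semidom) (simp add: finite_imp_CHAR_pos)
  moreover have "CHAR('a) dvd 2 * 2"
    using CHAR_dvd_CARD[where 'a = 'a] card_4 by simp
  ultimately have "CHAR('a) = 2"
    by (metis prime_dvd_mult_iff primes_dvd_imp_eq two_is_prime_nat)
  then show ?thesis
    using of_nat_CHAR[where 'a = 'a] by simp
qed

lemma add_self [simp]: "x + x = (0::'a)"
  by (metis one_add_one_eq_0 distrib_right mult_1 mult_zero_left)

lemma add_self_left [simp]: "x + (x + y) = (y::'a)"
  by (simp add: add.assoc[symmetric])

lemma uminus_eq [simp]: "- x = (x::'a)"
  by (rule minus_unique) (rule add_self)

lemma numeral_2_eq_0 [simp]: "2 = (0::'a)"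
  by (simp flip: one_add_one)

lemma numeral_3_eq_1 [simp]: "3 = (1::'a)"
proof -
  have "(3::'a) = 2 + 1"
    by (simp del: numeral_2_eq_0)
  then show ?thesis
    by simp
qed

lemma distinct_elems: "distinct [0, 1, w, w + 1]"
  using w_notin by (auto simp: add_eq_0_iff)

lemma UNIV_eq: "UNIV = {0, 1, w, w + 1}"
proof -
  have "card {0, 1, w, w + 1} = CARD('a)"
    using distinct_card[OF distinct_elems] card_4 by simp
  then show ?thesis
    by (intro card_subset_eq[symmetric]) simp_all
qed

lemma w_squared: "w * w = w + 1"
proof -
  have "w * w \<noteq> 1"
  proof
    assume "w * w = 1"
    then have "(w + 1) * (w + 1) = 0"
      by (simp add: algebra_simps)
    then show False
      using distinct_elems by simp
  qed
  moreover have "w * w \<notin> {0, w}"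
    using w_notin by auto
  moreover have "w * w \<in> {0, 1, w, w + 1}"
    using UNIV_eq by blast
  ultimately show ?thesis
    by blast
qed

primrec emb :: "gf4 \<Rightarrow> 'a" where
  "emb G0 = 0" | "emb G1 = 1" | "emb GW = w" | "emb GW2 = w + 1"

lemma emb_add: "emb (a \<boxplus> b) = emb a + emb b"
  by (cases a; cases b) (simp_all add: add_ac)

lemma emb_mul: "emb (a \<boxtimes> b) = emb a * emb b"
  by (cases a; cases b) (simp_all add: w_squared algebra_simps)

lemma emb_eq_iff [simp]: "emb a = emb b \<longleftrightarrow> a = b"
  using distinct_elems by (cases a; cases b) auto

lemma emb_eq_0_iff [simp]: "emb a = 0 \<longleftrightarrow> a = G0"
  using emb_eq_iff[of a G0] by simp

lemma image_emb: "emb ` set gf4_elems = UNIV"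
  using UNIV_eq by (simp add: gf4_elems_def)

lemma emb_surj: "\<exists>g. x = emb g"
  using image_emb by (metis UNIV_I imageE)

lemma ex_emb: "(\<exists>x. P x) \<longleftrightarrow> (\<exists>g. P (emb g))"
  using emb_surj by metis

lemma range_option_emb: "range f = insert (f None) ((\<lambda>g. f (Some (emb g))) ` set gf4_elems)"
  by (simp add: UNIV_option_conv image_image flip: image_emb)

definition coord_vec :: "coords \<Rightarrow> 'a^4" where
  "coord_vec = (\<lambda>(a, b, c, d). vec4 (emb a) (emb b) (emb c) (emb d))"

definition coord_point :: "coords \<Rightarrow> ('a^4) set" where
  "coord_point = pt \<circ> coord_vec"

definition coord_plane :: "coords \<Rightarrow> ('a^4) set set" where
  "coord_plane = plane \<circ> coord_vec"

lemma coord_vec_scale_coords: "coord_vec (scale_coords k c) = smul4 (emb k) (coord_vec c)"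
  by (cases c) (simp add: coord_vec_def emb_mul)

lemma coord_vec_add_coords: "coord_vec (add_coords a b) = coord_vec a + coord_vec b"
  by (cases a; cases b) (simp add: coord_vec_def emb_add)

lemma dot4_coord_vec: "dot4 (coord_vec c) (coord_vec x) = emb (dot_coords c x)"
  by (cases c; cases x) (simp add: coord_vec_def emb_add emb_mul)

lemma coord_vec_eq_iff: "coord_vec a = coord_vec b \<longleftrightarrow> a = b"
  by (cases a; cases b) (simp add: coord_vec_def vec4_eq_iff)

lemma coord_vec_eq_0_iff: "coord_vec c = 0 \<longleftrightarrow> c = (G0, G0, G0, G0)"
  by (cases c) (simp add: coord_vec_def zero_eq_vec4 vec4_eq_iff)

lemma coord_vec_surj: "\<exists>c. x = coord_vec c"
proof -
  obtain a b c d where "x $ 0 = emb a" "x $ 1 = emb b" "x $ 2 = emb c" "x $ 3 = emb d"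
    using emb_surj by meson
  then have "x = coord_vec (a, b, c, d)"
    using vec4_eta[of x] by (simp add: coord_vec_def)
  then show ?thesis ..
qed

lemma image_nonzero_eq_normalized_coords:
  assumes "\<And>k x. k \<noteq> 0 \<Longrightarrow> f (smul4 k x) = f x"
  shows "{f x | x. x \<noteq> 0} = (f \<circ> coord_vec) ` set normalized_coords"
proof (intro equalityI subsetI)
  fix y
  assume "y \<in> {f x | x. x \<noteq> 0}"
  then obtain x where y: "y = f x" and "x \<noteq> 0"
    by blast
  obtain c where x: "x = coord_vec c"
    using coord_vec_surj by blast
  with \<open>x \<noteq> 0\<close> have c: "c \<noteq> (G0, G0, G0, G0)"
    by (simp add: coord_vec_eq_0_iff)
  then have "y = (f \<circ> coord_vec) (normalize c)"
    using assms y x by (simp add: normalize_def coord_vec_scale_coords lead_coord_eq_G0_iff)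
  then show "y \<in> (f \<circ> coord_vec) ` set normalized_coords"
    using normalize_normalized[OF c] by blast
next
  fix y
  assume "y \<in> (f \<circ> coord_vec) ` set normalized_coords"
  then obtain c where "y = f (coord_vec c)" and "lead_coord c = G1"
    by (auto simp: set_normalized_coords)
  then show "y \<in> {f x | x. x \<noteq> 0}"
    using lead_coord_eq_G0_iff[of c] coord_vec_eq_0_iff[of c] by auto
qed

lemma inj_on_comp_coord_vec:
  assumes "\<And>a b. f (coord_vec a) = f (coord_vec b) \<Longrightarrow> a \<in> set normalized_coords
             \<Longrightarrow> \<exists>k. coord_vec b = smul4 k (coord_vec a)"
  shows "inj_on (f \<circ> coord_vec) (set normalized_coords)"
proof (rule inj_onI)
  fix a b
  assume a: "a \<in> set normalized_coords" and b: "b \<in> set normalized_coords"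
    and eq: "(f \<circ> coord_vec) a = (f \<circ> coord_vec) b"
  have "f (coord_vec a) = f (coord_vec b)"
    using eq by simp
  then obtain k where "coord_vec b = smul4 k (coord_vec a)"
    using assms a by blast
  moreover obtain g where "k = emb g"
    using emb_surj by blast
  ultimately have "b = scale_coords g a"
    by (simp add: coord_vec_scale_coords[symmetric] coord_vec_eq_iff)
  then show "a = b"
    using normalized_scale_coords_eq a b by metis
qed

lemma PG_points_coords: "PG_points = coord_point ` set normalized_coords"
  unfolding PG_points_def coord_point_def
  by (rule image_nonzero_eq_normalized_coords) (rule pt_smul4)

lemma PG_planes_coords: "PG_planes = coord_plane ` set normalized_coords"
  unfolding PG_planes_def coord_plane_def
  by (rule image_nonzero_eq_normalized_coords) (rule plane_smul4)

lemma inj_on_coord_point: "inj_on coord_point (set normalized_coords)"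
  unfolding coord_point_def
  by (rule inj_on_comp_coord_vec) (auto dest: pt_eq_imp_smul4)

lemma inj_on_coord_plane: "inj_on coord_plane (set normalized_coords)"
  unfolding coord_plane_def
proof (rule inj_on_comp_coord_vec)
  fix a b
  assume "plane (coord_vec a) = plane (coord_vec b)" and "a \<in> set normalized_coords"
  then show "\<exists>k. coord_vec b = smul4 k (coord_vec a)"
    by (intro plane_subset_imp_smul4) (auto simp: coord_vec_eq_0_iff dest: normalized_coords_nonzero)
qed

lemma coord_point_normalize [simp]: "coord_point (normalize c) = coord_point c"
  by (cases "c = (G0, G0, G0, G0)")
    (simp_all add: coord_point_def normalize_def coord_vec_scale_coords pt_smul4 lead_coord_eq_G0_iff)

lemma coord_point_in_coord_plane_iff:
  "x \<in> set normalized_coords \<Longrightarrow> coord_point x \<in> coord_plane c \<longleftrightarrow> dot_coords c x = G0"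
  by (auto simp: coord_point_def coord_plane_def pt_in_plane_iff coord_vec_eq_0_iff dot4_coord_vec
      dest: normalized_coords_nonzero)

lemma card_points_on:
  assumes "set M \<subseteq> set normalized_coords" and "distinct M"
  shows "card {P \<in> coord_point ` set M. P \<in> coord_plane c} = points_on c M"
proof -
  have "{x \<in> set M. coord_point x \<in> coord_plane c} = set (filter (\<lambda>x. dot_coords c x = G0) M)"
    unfolding set_filter using assms(1) coord_point_in_coord_plane_iff by blast
  then have "{P \<in> coord_point ` set M. P \<in> coord_plane c}
      = coord_point ` set (filter (\<lambda>x. dot_coords c x = G0) M)"
    by blast
  moreover have "inj_on coord_point (set (filter (\<lambda>x. dot_coords c x = G0) M))"
    using assms(1) by (auto intro: inj_on_subset[OF inj_on_coord_point])
  ultimately have "card {P \<in> coord_point ` set M. P \<in> coord_plane c}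
      = card (set (filter (\<lambda>x. dot_coords c x = G0) M))"
    by (simp add: card_image)
  also have "\<dots> = points_on c M"
    unfolding points_on_def by (rule distinct_card[OF distinct_filter[OF assms(2)]])
  finally show ?thesis .
qed

lemma card_planes_through:
  assumes "set N \<subseteq> set normalized_coords" and "distinct N" and "x \<in> set normalized_coords"
  shows "card {\<pi> \<in> coord_plane ` set N. coord_point x \<in> \<pi>} = planes_through x N"
proof -
  have "{c \<in> set N. coord_point x \<in> coord_plane c} = set (filter (\<lambda>c. dot_coords c x = G0) N)"
    unfolding set_filter using assms(3) coord_point_in_coord_plane_iff by blast
  then have "{\<pi> \<in> coord_plane ` set N. coord_point x \<in> \<pi>}
      = coord_plane ` set (filter (\<lambda>c. dot_coords c x = G0) N)"
    by blast
  moreover have "inj_on coord_plane (set (filter (\<lambda>c. dot_coords c x = G0) N))"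
    using assms(1) by (auto intro: inj_on_subset[OF inj_on_coord_plane])
  ultimately have "card {\<pi> \<in> coord_plane ` set N. coord_point x \<in> \<pi>}
      = card (set (filter (\<lambda>c. dot_coords c x = G0) N))"
    by (simp add: card_image)
  also have "\<dots> = planes_through x N"
    unfolding planes_through_def by (rule distinct_card[OF distinct_filter[OF assms(2)]])
  finally show ?thesis .
qed

lemma line_through_coord_vec:
  "line_through (coord_vec p) (coord_vec r) = coord_point ` set (line_coords p r)"
proof -
  have "line_through (coord_vec p) (coord_vec r)
      = {coord_point (add_coords (scale_coords a p) (scale_coords b r)) | a b. (a, b) \<noteq> (G0, G0)}"
    by (simp add: line_through_def coord_point_def ex_emb coord_vec_add_coords coord_vec_scale_coords)
  also have "\<dots> = {coord_point (normalize (add_coords (scale_coords a p) (scale_coords b r))) | a b.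
      (a, b) \<noteq> (G0, G0)}"
    by simp
  also have "\<dots> = coord_point ` set (line_coords p r)"
    unfolding set_line_coords by blast
  finally show ?thesis .
qed

lemma twisted_cubic_coords: "twisted_cubic = coord_point ` set cubic_list"
proof -
  have "cubic_pt (Some (emb g)) = coord_point (cubic_coords g)" for g
    by (simp add: cubic_pt_def coord_point_def coord_vec_def cubic_coords_def emb_mul
        power2_eq_square power3_eq_cube)
  moreover have "cubic_pt None = coord_point (G1, G0, G0, G0)"
    by (simp add: cubic_pt_def coord_point_def coord_vec_def)
  ultimately show ?thesis
    by (simp add: twisted_cubic_def range_option_emb cubic_list_def image_image)
qed

lemma Gamma_planes_coords: "Gamma_planes = coord_plane ` set osc_list"
proof -
  have "osc_plane (Some (emb g)) = coord_plane (osc_coords g)" for g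
    by (simp add: osc_plane_def coord_plane_def coord_vec_def osc_coords_def emb_mul
        power2_eq_square power3_eq_cube)
  moreover have "osc_plane None = coord_plane (G0, G0, G0, G1)"
    by (simp add: osc_plane_def coord_plane_def coord_vec_def)
  ultimately show ?thesis
    by (simp add: Gamma_planes_def range_option_emb osc_list_def image_image)
qed

lemma on_tangent_iff: "(\<exists>t. P \<in> tangent t) \<longleftrightarrow> P \<in> coord_point ` set tangent_list"
proof -
  have "tangent (Some (emb g)) = coord_point ` set (line_coords (cubic_coords g) (tangent_dir g))" for g
    by (simp add: tangent_def line_through_coord_vec[symmetric] coord_vec_def cubic_coords_def
        tangent_dir_def emb_mul power2_eq_square power3_eq_cube)
  moreover have "tangent None = coord_point ` set (line_coords (G1, G0, G0, G0) (G0, G1, G0, G0))"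
    by (simp add: tangent_def line_through_coord_vec[symmetric] coord_vec_def)
  moreover have "(\<exists>t. P \<in> tangent t) \<longleftrightarrow> P \<in> \<Union> (range tangent)"
    by blast
  ultimately show ?thesis
    by (simp add: range_option_emb tangent_list_def image_Un image_UN)
qed

lemma Collect_PG_points_coords:
  assumes "\<And>x. x \<in> set normalized_coords \<Longrightarrow> Q (coord_point x) \<longleftrightarrow> R x"
  shows "{P \<in> PG_points. Q P} = coord_point ` set (filter R normalized_coords)"
  unfolding PG_points_coords set_filter using assms by blast

lemma Collect_PG_planes_coords:
  assumes "\<And>c. c \<in> set normalized_coords \<Longrightarrow> Q (coord_plane c) \<longleftrightarrow> R c"
  shows "{\<pi> \<in> PG_planes. Q \<pi>} = coord_plane ` set (filter R normalized_coords)"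
  unfolding PG_planes_coords set_filter using assms by blast

lemma coord_point_in_image_iff:
  "x \<in> set normalized_coords \<Longrightarrow> set xs \<subseteq> set normalized_coords
    \<Longrightarrow> coord_point x \<in> coord_point ` set xs \<longleftrightarrow> x \<in> set xs"
  by (rule inj_on_image_mem_iff[OF inj_on_coord_point])

lemma coord_plane_in_image_iff:
  "c \<in> set normalized_coords \<Longrightarrow> set cs \<subseteq> set normalized_coords
    \<Longrightarrow> coord_plane c \<in> coord_plane ` set cs \<longleftrightarrow> c \<in> set cs"
  by (rule inj_on_image_mem_iff[OF inj_on_coord_plane])

lemma filter_mem_normalized_coords:
  "set xs \<subseteq> set normalized_coords \<Longrightarrow> set (filter (\<lambda>x. x \<in> set xs) normalized_coords) = set xs"
  by auto

lemma point_classes_coords: "point_classes = map (\<lambda>M. coord_point ` set M) point_class_coords"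
proof -
  have cubic: "coord_point x \<in> twisted_cubic \<longleftrightarrow> x \<in> set cubic_list"
    if "x \<in> set normalized_coords" for x
    unfolding twisted_cubic_coords using that cubic_list_normalized by (rule coord_point_in_image_iff)
  have tangent: "(\<exists>t. coord_point x \<in> tangent t) \<longleftrightarrow> x \<in> set tangent_list"
    if "x \<in> set normalized_coords" for x
    unfolding on_tangent_iff using that tangent_list_normalized by (rule coord_point_in_image_iff)
  then have no_tangent: "(\<forall>t. coord_point x \<notin> tangent t) \<longleftrightarrow> x \<notin> set tangent_list"
    if "x \<in> set normalized_coords" for x
    using that by blast
  have gamma: "card {\<pi> \<in> Gamma_planes. coord_point x \<in> \<pi>} = planes_through x osc_list"
    if "x \<in> set normalized_coords" for x
    unfolding Gamma_planes_coords using osc_list_normalized distinct_osc_list that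
    by (rule card_planes_through)
  have "twisted_cubic = coord_point ` set (filter (\<lambda>x. x \<in> set cubic_list) normalized_coords)"
    by (simp only: twisted_cubic_coords filter_mem_normalized_coords[OF cubic_list_normalized])
  moreover have "T_points = coord_point `
      set (filter (\<lambda>x. x \<notin> set cubic_list \<and> x \<in> set tangent_list) normalized_coords)"
    unfolding T_points_def by (rule Collect_PG_points_coords) (simp add: cubic tangent)
  moreover have "muGamma_points \<mu> = coord_point ` set (filter (\<lambda>x. x \<notin> set cubic_list
      \<and> x \<notin> set tangent_list \<and> planes_through x osc_list = \<mu>) normalized_coords)" for \<mu>
    unfolding muGamma_points_def by (rule Collect_PG_points_coords) (simp add: cubic no_tangent gamma)
  ultimately show ?thesis
    by (simp add: point_classes_def point_class_coords_def)
qed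

lemma plane_classes_coords: "plane_classes = map (\<lambda>N. coord_plane ` set N) plane_class_coords"
proof -
  have gamma: "coord_plane c \<in> Gamma_planes \<longleftrightarrow> c \<in> set osc_list"
    if "c \<in> set normalized_coords" for c
    unfolding Gamma_planes_coords using that osc_list_normalized by (rule coord_plane_in_image_iff)
  have cubic: "card (coord_plane c \<inter> twisted_cubic) = points_on c cubic_list" for c
  proof -
    have "coord_plane c \<inter> twisted_cubic = {P \<in> coord_point ` set cubic_list. P \<in> coord_plane c}"
      by (auto simp: twisted_cubic_coords)
    then show ?thesis
      using card_points_on[OF cubic_list_normalized distinct_cubic_list] by simp
  qed
  have "Gamma_planes = coord_plane ` set (filter (\<lambda>c. c \<in> set osc_list) normalized_coords)"
    by (simp only: Gamma_planes_coords filter_mem_normalized_coords[OF osc_list_normalized])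
  moreover have "dC_planes d = coord_plane `
      set (filter (\<lambda>c. points_on c cubic_list = d) normalized_coords)" for d
    unfolding dC_planes_def by (rule Collect_PG_planes_coords) (simp add: cubic)
  moreover have "onebar_planes = coord_plane `
      set (filter (\<lambda>c. c \<notin> set osc_list \<and> points_on c cubic_list = 1) normalized_coords)"
    unfolding onebar_planes_def by (rule Collect_PG_planes_coords) (simp add: cubic gamma)
  ultimately show ?thesis
    by (simp add: plane_classes_def plane_class_coords_def)
qed

theorem incidence_table:
  "\<forall>i<5. \<forall>j<5.
     (\<forall>\<pi>\<in>(plane_classes :: ('a^4) set set set list) ! i.
        card {P \<in> (point_classes :: ('a^4) set set list) ! j. P \<in> \<pi>} = points_on_plane_table ! i ! j)
   \<and> (\<forall>P\<in>(point_classes :: ('a^4) set set list) ! j.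
        card {\<pi> \<in> (plane_classes :: ('a^4) set set set list) ! i. P \<in> \<pi>} = planes_through_point_table ! i ! j)"
proof (intro allI impI conjI ballI)
  fix i j :: nat
  assume i: "i < 5" and j: "j < 5"
  define N where "N = plane_class_coords ! i"
  define M where "M = point_class_coords ! j"
  have N: "set N \<subseteq> set normalized_coords" "distinct N"
    using plane_class_coords_normalized[OF nth_mem] i by (simp_all add: N_def)
  have M: "set M \<subseteq> set normalized_coords" "distinct M"
    using point_class_coords_normalized[OF nth_mem] j by (simp_all add: M_def)
  have planes: "plane_classes ! i = coord_plane ` set N"
    using i by (simp add: plane_classes_coords N_def)
  have points: "point_classes ! j = coord_point ` set M"
    using j by (simp add: point_classes_coords M_def)
  show "card {P \<in> point_classes ! j. P \<in> \<pi>} = points_on_plane_table ! i ! j"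
    if \<pi>_mem: "\<pi> \<in> plane_classes ! i" for \<pi> :: "('a^4) set set"
  proof -
    obtain c where \<pi>: "\<pi> = coord_plane c" and c: "c \<in> set N"
      using \<pi>_mem unfolding planes by (rule imageE)
    have "card {P \<in> point_classes ! j. P \<in> \<pi>} = points_on c M"
      unfolding \<pi> points by (rule card_points_on[OF M])
    also have "\<dots> = points_on_plane_table ! i ! j"
      using incidence_counts_nth(1)[OF i j] c unfolding M_def N_def by blast
    finally show ?thesis .
  qed
  show "card {\<pi> \<in> plane_classes ! i. P \<in> \<pi>} = planes_through_point_table ! i ! j"
    if P_mem: "P \<in> point_classes ! j" for P :: "('a^4) set"
  proof -
    obtain x where P: "P = coord_point x" and x: "x \<in> set M"
      using P_mem unfolding points by (rule imageE)
    have "card {\<pi> \<in> plane_classes ! i. P \<in> \<pi>} = planes_through x N"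
      unfolding P planes using M(1) x by (intro card_planes_through[OF N]) blast
    also have "\<dots> = planes_through_point_table ! i ! j"
      using incidence_counts_nth(2)[OF i j] x unfolding M_def N_def by blast
    finally show ?thesis .
  qed
qed

end

theorem mainTheorem17:
  fixes F :: "'a::{field,finite} itself"
  assumes "CARD('a) = 4"
  defines "Tab \<equiv> [[1,8,6,6,0],[2,7,1,6,5],[3,2,4,6,6],[1,4,2,10,4],[0,5,3,6,7]] :: nat list list"
      and "Bab \<equiv> [[1,2,3,1,0],[8,7,2,4,5],[6,1,4,2,3],[6,6,6,10,6],[0,5,6,4,7]] :: nat list list"
  shows "\<forall>i<5. \<forall>j<5.
           (\<forall>\<pi>\<in>(plane_classes :: ('a^4) set set set list) ! i.
               card {P \<in> (point_classes :: ('a^4) set set list) ! j. P \<in> \<pi>} = Tab ! i ! j)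
         \<and> (\<forall>P\<in>(point_classes :: ('a^4) set set list) ! j.
               card {\<pi> \<in> (plane_classes :: ('a^4) set set set list) ! i. P \<in> \<pi>} = Bab ! i ! j)"
proof -
  have "card {0, 1 :: 'a} \<noteq> CARD('a)"
    using assms(1) by simp
  then have "{0, 1} \<noteq> (UNIV :: 'a set)"
    by metis
  then obtain w :: 'a where "w \<notin> {0, 1}"
    by blast
  with assms(1) interpret field4 w
    by unfold_locales
  show ?thesis
    using incidence_table unfolding Tab_def Bab_def points_on_plane_table_def planes_through_point_table_def .
qed

end
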